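(* Let $\mathfrak{R}=(G,G',S,\phi,\rho,\delta)$ be a reconciliation and $x,y\in V(G')$ with $x<y$ and $\rho(x)=\rho(y)$. Then $y\in\Delta(\mathfrak{R})$.
   Context: All trees are rooted binary trees whose root node has degree 1; every other non-leaf node $x$ has exactly two children $x_l,x_r$. For nodes of a rooted tree, $y\le x$ means $x$ lies on the path from $y$ to the root; $y<x$ means $y\le x$, $y\ne x$. $G$ is a gene tree, $S$ a species tree, $\phi:L(G)\to L(S)$. A tree $G'$ is an extension of $G$ if $G$ is obtained from $G'$ by pruning some subtrees and suppressing degree-2 nodes. A map $\rho:V(G')\to V(S)$ is consistent with $S$ if $\rho(root(G'))=root(S)$ and every node $x$ of $G'$ with two children satisfies (D) $\rho(x)=\rho(x_l)=\rho(x_r)$ or (S) $\rho(x)_l=\rho(x_l)$ and $\rho(x)_r=\rho(x_r)$. A reconciliation $(G,G',S,\phi,\rho,\delta)$ consists of an extension $G'$ of $G$, a consistent $\rho$ with $\rho|_{L(G)}=\phi$, and an injective partial function $\delta$ from duplications to losses ($L(G')\setminus L(G)$) with $\rho(x)=\rho(\delta(x))$. $\Delta(\mathfrak{R})$ (duplications) is the set of nodes with two children satisfying (D). *)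

theory Defs
  imports Main
begin

record 'a rtree =
  nodes :: "'a set"
  rt :: 'a
  chl :: "'a \<Rightarrow> 'a list"

definition child_rel :: "('a, 'z) rtree_scheme \<Rightarrow> ('a \<times> 'a) set" where
  "child_rel T = {(p, c). p \<in> nodes T \<and> c \<in> set (chl T p)}"

text \<open>tle T y x means y \<le> x: x lies on the path from y to the root.\<close>
definition tle :: "('a, 'z) rtree_scheme \<Rightarrow> 'a \<Rightarrow> 'a \<Rightarrow> bool" where
  "tle T y x \<longleftrightarrow> x \<in> nodes T \<and> y \<in> nodes T \<and> (x, y) \<in> (child_rel T)\<^sup>*"

definition tless :: "('a, 'z) rtree_scheme \<Rightarrow> 'a \<Rightarrow> 'a \<Rightarrow> bool" where
  "tless T y x \<longleftrightarrow> tle T y x \<and> y \<noteq> x"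

definition leaves :: "('a, 'z) rtree_scheme \<Rightarrow> 'a set" where
  "leaves T = {v \<in> nodes T. chl T v = []}"

definition rooted_tree :: "('a, 'z) rtree_scheme \<Rightarrow> bool" where
  "rooted_tree T \<longleftrightarrow>
     finite (nodes T) \<and> rt T \<in> nodes T \<and>
     (\<forall>v\<in>nodes T. set (chl T v) \<subseteq> nodes T \<and> distinct (chl T v)) \<and>
     (\<forall>v\<in>nodes T. (rt T, v) \<in> (child_rel T)\<^sup>*) \<and>
     (\<forall>v\<in>nodes T. rt T \<notin> set (chl T v)) \<and>
     (\<forall>u\<in>nodes T. \<forall>w\<in>nodes T. \<forall>v. v \<in> set (chl T u) \<and> v \<in> set (chl T w) \<longrightarrow> u = w)"

definition binary_tree :: "('a, 'z) rtree_scheme \<Rightarrow> bool" where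
  "binary_tree T \<longleftrightarrow> rooted_tree T \<and> length (chl T (rt T)) = 1 \<and>
     (\<forall>v\<in>nodes T - {rt T}. length (chl T v) = 0 \<or> length (chl T v) = 2)"

text \<open>Pruning all subtrees that contain no leaf of K and suppressing degree-2 nodes.\<close>
definition hasK :: "('a, 'z) rtree_scheme \<Rightarrow> 'a set \<Rightarrow> 'a \<Rightarrow> bool" where
  "hasK T K v \<longleftrightarrow> (\<exists>l\<in>K. tle T l v)"

definition pruned_nodes :: "('a, 'z) rtree_scheme \<Rightarrow> 'a set \<Rightarrow> 'a set" where
  "pruned_nodes T K = {rt T} \<union> K \<union>
     {v \<in> nodes T. length (chl T v) = 2 \<and> (\<forall>c\<in>set (chl T v). hasK T K c)}"

definition top_below :: "('a, 'z) rtree_scheme \<Rightarrow> 'a set \<Rightarrow> 'a \<Rightarrow> 'a" where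
  "top_below T K c = (THE u. u \<in> pruned_nodes T K \<and> tle T u c \<and>
       (\<forall>w\<in>pruned_nodes T K. tle T w c \<longrightarrow> tle T w u))"

definition pruned_chl :: "('a, 'z) rtree_scheme \<Rightarrow> 'a set \<Rightarrow> 'a \<Rightarrow> 'a list" where
  "pruned_chl T K v = map (top_below T K) (filter (hasK T K) (chl T v))"

text \<open>G' is an extension of G: G is (isomorphic, fixing the kept leaves, to) the tree obtained
  from G' by keeping the leaves K, pruning everything else and suppressing degree-2 nodes.\<close>
definition is_extension :: "'a rtree \<Rightarrow> 'a rtree \<Rightarrow> bool" where
  "is_extension G' G \<longleftrightarrow>
     (\<exists>K f. K \<subseteq> leaves G' \<and> K \<noteq> {} \<and>
        bij_betw f (pruned_nodes G' K) (nodes G) \<and> f (rt G') = rt G \<and>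
        (\<forall>l\<in>K. f l = l) \<and>
        (\<forall>v\<in>pruned_nodes G' K. set (chl G (f v)) = f ` set (pruned_chl G' K v)))"

text \<open>Conditions (D) and (S) at a node x with two children x_l = chl x ! 0, x_r = chl x ! 1.
  The labelling of children is immaterial, so (S) asks that the two children of rho(x)
  are exactly rho(x_l), rho(x_r).\<close>
definition condD :: "'a rtree \<Rightarrow> ('a \<Rightarrow> 'b) \<Rightarrow> 'a \<Rightarrow> bool" where
  "condD G' \<rho> x \<longleftrightarrow> \<rho> x = \<rho> (chl G' x ! 0) \<and> \<rho> x = \<rho> (chl G' x ! 1)"

definition condS :: "'a rtree \<Rightarrow> 'b rtree \<Rightarrow> ('a \<Rightarrow> 'b) \<Rightarrow> 'a \<Rightarrow> bool" where
  "condS G' S \<rho> x \<longleftrightarrow> length (chl S (\<rho> x)) = 2 \<and>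
     set (chl S (\<rho> x)) = {\<rho> (chl G' x ! 0), \<rho> (chl G' x ! 1)}"

definition consistent :: "'a rtree \<Rightarrow> 'b rtree \<Rightarrow> ('a \<Rightarrow> 'b) \<Rightarrow> bool" where
  "consistent G' S \<rho> \<longleftrightarrow> \<rho> (rt G') = rt S \<and> (\<forall>x\<in>nodes G'. \<rho> x \<in> nodes S) \<and>
     (\<forall>x\<in>nodes G'. length (chl G' x) = 2 \<longrightarrow> condD G' \<rho> x \<or> condS G' S \<rho> x)"

definition dups :: "'a rtree \<Rightarrow> ('a \<Rightarrow> 'b) \<Rightarrow> 'a set" where
  "dups G' \<rho> = {x \<in> nodes G'. length (chl G' x) = 2 \<and> condD G' \<rho> x}"

definition reconciliation ::
  "'a rtree \<Rightarrow> 'a rtree \<Rightarrow> 'b rtree \<Rightarrow> ('a \<Rightarrow> 'b) \<Rightarrow> ('a \<Rightarrow> 'b) \<Rightarrow> ('a \<Rightarrow> 'a option) \<Rightarrow> bool" where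
  "reconciliation G G' S \<phi> \<rho> \<delta> \<longleftrightarrow>
     binary_tree G \<and> binary_tree G' \<and> binary_tree S \<and>
     (\<forall>l\<in>leaves G. \<phi> l \<in> leaves S) \<and>
     is_extension G' G \<and> consistent G' S \<rho> \<and>
     (\<forall>l\<in>leaves G. \<rho> l = \<phi> l) \<and>
     dom \<delta> \<subseteq> dups G' \<rho> \<and> inj_on \<delta> (dom \<delta>) \<and>
     ran \<delta> \<subseteq> leaves G' - leaves G \<and>
     (\<forall>x z. \<delta> x = Some z \<longrightarrow> \<rho> x = \<rho> z)"

end

theory Submission
  imports Defs
begin

text \<open>Along any path of G' below the root, \<rho> either stays put (D) or steps to a child in S (S);
  hence \<rho> is monotone for the ancestor orders. If \<rho> x = \<rho> y for a proper ancestor y of x,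
  then y cannot be an (S) node, since its child c would satisfy \<rho> y > \<rho> c \<ge> \<rho> x = \<rho> y,
  a cycle in S. Nor can y be the root of G': then \<rho> would send the root's only child, and with
  it every non-root node, to the root of S, which has degree one and can be neither the image
  of an (S) node nor a leaf; but some leaf of G is a leaf of G' and is mapped to a leaf of S.\<close>

lemma in_set_length2_cases:
  "c \<in> set xs \<Longrightarrow> length xs = 2 \<Longrightarrow> c = xs ! 0 \<or> c = xs ! 1"
  by (auto simp: in_set_conv_nth less_Suc_eq numeral_2_eq_2)

lemma binary_tree_rooted: "binary_tree T \<Longrightarrow> rooted_tree T"
  unfolding binary_tree_def by blast

lemma rooted_tree_reachable: "rooted_tree T \<Longrightarrow> v \<in> nodes T \<Longrightarrow> (rt T, v) \<in> (child_rel T)\<^sup>*"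
  unfolding rooted_tree_def by blast

lemma rooted_tree_child_ne_root:
  assumes "rooted_tree T" "(p, c) \<in> child_rel T"
  shows "c \<noteq> rt T"
proof -
  have "p \<in> nodes T" "c \<in> set (chl T p)" using assms(2) unfolding child_rel_def by auto
  moreover have "\<forall>v\<in>nodes T. rt T \<notin> set (chl T v)" using assms(1) unfolding rooted_tree_def by blast
  ultimately show ?thesis by blast
qed

lemma rooted_tree_parent_unique:
  assumes "rooted_tree T" "(p, c) \<in> child_rel T" "(q, c) \<in> child_rel T"
  shows "p = q"
proof -
  have "p \<in> nodes T" "c \<in> set (chl T p)" "q \<in> nodes T" "c \<in> set (chl T q)"
    using assms(2,3) unfolding child_rel_def by auto
  moreover have "\<forall>u\<in>nodes T. \<forall>w\<in>nodes T. \<forall>v. v \<in> set (chl T u) \<and> v \<in> set (chl T w) \<longrightarrow> u = w"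
    using assms(1) unfolding rooted_tree_def by blast
  ultimately show ?thesis by blast
qed

lemma rooted_tree_child_rel_acyclic:
  assumes "rooted_tree T" "v \<in> nodes T"
  shows "(v, v) \<notin> (child_rel T)\<^sup>+"
proof -
  have "(rt T, v) \<in> (child_rel T)\<^sup>*" using rooted_tree_reachable[OF assms] .
  then show ?thesis
  proof (induction rule: rtrancl_induct)
    case base
    show ?case
    proof
      assume "(rt T, rt T) \<in> (child_rel T)\<^sup>+"
      then obtain p where "(p, rt T) \<in> child_rel T" by (meson tranclD2)
      with rooted_tree_child_ne_root[OF assms(1)] show False by blast
    qed
  next
    case (step v w)
    show ?case
    proof
      assume "(w, w) \<in> (child_rel T)\<^sup>+"
      then obtain p where pw: "(w, p) \<in> (child_rel T)\<^sup>*" and p: "(p, w) \<in> child_rel T"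
        by (meson tranclD2)
      have "p = v" using rooted_tree_parent_unique[OF assms(1) p step(2)] .
      then have "(v, v) \<in> (child_rel T)\<^sup>+" using step(2) pw by (meson rtrancl_into_trancl2)
      then show False using step(3) by blast
    qed
  qed
qed

lemma rooted_tree_below_root:
  assumes "rooted_tree T" "(c, rt T) \<in> (child_rel T)\<^sup>*"
  shows "c = rt T"
  using assms(2)
proof (cases rule: rtranclE)
  case (step q)
  then show ?thesis using rooted_tree_child_ne_root[OF assms(1) step(2)] by simp
qed

lemma rooted_tree_ancestor_ne_root:
  "rooted_tree T \<Longrightarrow> (c, p) \<in> (child_rel T)\<^sup>* \<Longrightarrow> c \<noteq> rt T \<Longrightarrow> p \<noteq> rt T"
  using rooted_tree_below_root by metis

lemma binary_tree_inner_length: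
  assumes "binary_tree T" "(p, c) \<in> child_rel T" "p \<noteq> rt T"
  shows "length (chl T p) = 2"
proof -
  have "p \<in> nodes T - {rt T}" "chl T p \<noteq> []" using assms(2,3) unfolding child_rel_def by auto
  then show ?thesis using assms(1) unfolding binary_tree_def by auto
qed

lemma binary_tree_root_not_leaf:
  "binary_tree T \<Longrightarrow> rt T \<notin> leaves T"
  unfolding binary_tree_def leaves_def by auto

lemma binary_tree_root_child:
  assumes "binary_tree T"
  obtains c where "chl T (rt T) = [c]" "(rt T, c) \<in> child_rel T"
proof -
  have "length (chl T (rt T)) = 1" "rt T \<in> nodes T"
    using assms unfolding binary_tree_def rooted_tree_def by auto
  then obtain c where "chl T (rt T) = [c]" by (auto simp: length_Suc_conv)
  with \<open>rt T \<in> nodes T\<close> show ?thesis using that unfolding child_rel_def by auto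
qed

lemma binary_tree_below_root_child:
  assumes "binary_tree T" "v \<in> nodes T" "v \<noteq> rt T" "(rt T, c) \<in> child_rel T"
  shows "(c, v) \<in> (child_rel T)\<^sup>*"
proof -
  have "(rt T, v) \<in> (child_rel T)\<^sup>*" using rooted_tree_reachable[OF binary_tree_rooted] assms(1,2) .
  then obtain c' where c': "(rt T, c') \<in> child_rel T" and "(c', v) \<in> (child_rel T)\<^sup>*"
    using assms(3) by (metis converse_rtranclE)
  moreover obtain c0 where "chl T (rt T) = [c0]" using binary_tree_root_child[OF assms(1)] .
  then have "c' = c" using c' assms(4) unfolding child_rel_def by auto
  ultimately show ?thesis by simp
qed

lemma condS_child:
  assumes "condS G' S \<rho> p" "c \<in> set (chl G' p)" "length (chl G' p) = 2" "\<rho> p \<in> nodes S"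
  shows "(\<rho> p, \<rho> c) \<in> child_rel S"
  using assms in_set_length2_cases[OF assms(2,3)] unfolding condS_def child_rel_def by auto

lemma consistent_child_image:
  assumes "binary_tree G'" "consistent G' S \<rho>" "(p, c) \<in> child_rel G'" "p \<noteq> rt G'"
  shows "\<rho> c = \<rho> p \<or> (length (chl S (\<rho> p)) = 2 \<and> (\<rho> p, \<rho> c) \<in> child_rel S)"
proof -
  have p: "p \<in> nodes G'" and c: "c \<in> set (chl G' p)" using assms(3) unfolding child_rel_def by auto
  have len: "length (chl G' p) = 2" using binary_tree_inner_length[OF assms(1,3,4)] .
  have "condD G' \<rho> p \<or> condS G' S \<rho> p" using assms(2) p len unfolding consistent_def by blast
  then show ?thesis
  proof
    assume "condD G' \<rho> p"
    then show ?thesis using in_set_length2_cases[OF c len] unfolding condD_def by auto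
  next
    assume S: "condS G' S \<rho> p"
    have "\<rho> p \<in> nodes S" using assms(2) p unfolding consistent_def by blast
    then show ?thesis using condS_child[OF S c len] S unfolding condS_def by blast
  qed
qed

lemma consistent_descendant_image:
  assumes "binary_tree G'" "consistent G' S \<rho>"
    and "(c, x) \<in> (child_rel G')\<^sup>*" "c \<noteq> rt G'"
  shows "(\<rho> c, \<rho> x) \<in> (child_rel S)\<^sup>*"
  using assms(3)
proof (induction rule: rtrancl_induct)
  case (step p x)
  have "p \<noteq> rt G'"
    using rooted_tree_ancestor_ne_root[OF binary_tree_rooted[OF assms(1)] step(1) assms(4)] .
  then show ?case
    using consistent_child_image[OF assms(1,2) step(2)] step(3) by (metis rtrancl.rtrancl_into_rtrancl)
qed simp

lemma consistent_root_image_descendant: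
  assumes "binary_tree G'" "binary_tree S" "consistent G' S \<rho>"
    and "(c, x) \<in> (child_rel G')\<^sup>*" "c \<noteq> rt G'" "\<rho> c = rt S"
  shows "\<rho> x = rt S"
  using assms(4)
proof (induction rule: rtrancl_induct)
  case (step p x)
  have "p \<noteq> rt G'"
    using rooted_tree_ancestor_ne_root[OF binary_tree_rooted[OF assms(1)] step(1) assms(5)] .
  moreover have "length (chl S (rt S)) \<noteq> 2" using assms(2) unfolding binary_tree_def by simp
  ultimately show ?case using consistent_child_image[OF assms(1,3) step(2)] step(3) by auto
qed (use assms(6) in simp)

lemma consistent_condS_descendant_image_ne:
  assumes "binary_tree G'" "binary_tree S" "consistent G' S \<rho>"
    and "condS G' S \<rho> p" "length (chl G' p) = 2"
    and "(p, c) \<in> child_rel G'" "(c, x) \<in> (child_rel G')\<^sup>*"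
  shows "\<rho> x \<noteq> \<rho> p"
proof
  assume x: "\<rho> x = \<rho> p"
  have p: "p \<in> nodes G'" and "c \<in> set (chl G' p)" using assms(6) unfolding child_rel_def by auto
  moreover have \<rho>p: "\<rho> p \<in> nodes S" using assms(3) p unfolding consistent_def by blast
  ultimately have "(\<rho> p, \<rho> c) \<in> child_rel S" using condS_child[OF assms(4) _ assms(5)] by blast
  moreover have "c \<noteq> rt G'" using rooted_tree_child_ne_root[OF binary_tree_rooted[OF assms(1)] assms(6)] .
  then have "(\<rho> c, \<rho> p) \<in> (child_rel S)\<^sup>*"
    using consistent_descendant_image[OF assms(1,3,7)] x by simp
  ultimately have "(\<rho> p, \<rho> p) \<in> (child_rel S)\<^sup>+" by (metis rtrancl_into_trancl2)
  then show False using rooted_tree_child_rel_acyclic[OF binary_tree_rooted[OF assms(2)] \<rho>p] by blast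
qed

lemma extension_common_leaf:
  assumes "is_extension G' G"
  obtains l where "l \<in> leaves G'" "l \<in> leaves G"
proof -
  obtain K f where K: "K \<subseteq> leaves G'" "K \<noteq> {}"
    and bij: "bij_betw f (pruned_nodes G' K) (nodes G)" and fK: "\<forall>l\<in>K. f l = l"
    and fch: "\<forall>v\<in>pruned_nodes G' K. set (chl G (f v)) = f ` set (pruned_chl G' K v)"
    using assms unfolding is_extension_def by blast
  obtain l where l: "l \<in> K" using K(2) by blast
  have lP: "l \<in> pruned_nodes G' K" using l unfolding pruned_nodes_def by blast
  have "chl G' l = []" using K(1) l unfolding leaves_def by auto
  then have "chl G l = []" using fch lP fK l unfolding pruned_chl_def by auto
  moreover have "l \<in> nodes G" using bij lP fK l by (metis bij_betw_apply)
  ultimately show ?thesis using that K(1) l unfolding leaves_def by blast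
qed

lemma reconciliation_image_ne_root:
  assumes "reconciliation G G' S \<phi> \<rho> \<delta>" "v \<in> nodes G'" "v \<noteq> rt G'"
  shows "\<rho> v \<noteq> rt S"
proof
  assume v: "\<rho> v = rt S"
  have bG': "binary_tree G'" and bS: "binary_tree S" and cons: "consistent G' S \<rho>"
    and ext: "is_extension G' G" and leaves_\<phi>: "\<forall>l\<in>leaves G. \<rho> l = \<phi> l \<and> \<phi> l \<in> leaves S"
    using assms(1) unfolding reconciliation_def by auto
  have rG': "rooted_tree G'" using binary_tree_rooted[OF bG'] .
  obtain c where rc: "(rt G', c) \<in> child_rel G'" using binary_tree_root_child[OF bG'] by blast
  have c: "c \<noteq> rt G'" using rooted_tree_child_ne_root[OF rG' rc] .
  have "(\<rho> c, rt S) \<in> (child_rel S)\<^sup>*"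
    using consistent_descendant_image[OF bG' cons binary_tree_below_root_child[OF bG' assms(2,3) rc] c] v
    by simp
  then have \<rho>c: "\<rho> c = rt S" using rooted_tree_below_root[OF binary_tree_rooted[OF bS]] by blast
  obtain l where l: "l \<in> leaves G'" "l \<in> leaves G" using extension_common_leaf[OF ext] .
  have "l \<noteq> rt G'" using l(1) binary_tree_root_not_leaf[OF bG'] by blast
  then have "\<rho> l = rt S"
    using consistent_root_image_descendant[OF bG' bS cons _ c \<rho>c] binary_tree_below_root_child[OF bG' _ _ rc] l(1)
    unfolding leaves_def by blast
  then show False using leaves_\<phi> l(2) binary_tree_root_not_leaf[OF bS] by metis
qed

theorem lemma4:
  fixes G G' :: "'a rtree" and S :: "'b rtree"
    and \<phi> \<rho> :: "'a \<Rightarrow> 'b" and \<delta> :: "'a \<Rightarrow> 'a option" and x y :: 'a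
  assumes "reconciliation G G' S \<phi> \<rho> \<delta>"
    and "x \<in> nodes G'" and "y \<in> nodes G'"
    and "tless G' x y"
    and "\<rho> x = \<rho> y"
  shows "y \<in> dups G' \<rho>"
proof -
  have bG': "binary_tree G'" and bS: "binary_tree S" and cons: "consistent G' S \<rho>"
    using assms(1) unfolding reconciliation_def by auto
  have rG': "rooted_tree G'" using binary_tree_rooted[OF bG'] .
  obtain c where yc: "(y, c) \<in> child_rel G'" and cx: "(c, x) \<in> (child_rel G')\<^sup>*"
    using assms(4) unfolding tless_def tle_def by (metis converse_rtranclE)
  have "x \<noteq> rt G'"
    using rooted_tree_ancestor_ne_root[OF rG' cx rooted_tree_child_ne_root[OF rG' yc]] .
  moreover have "\<rho> (rt G') = rt S" using cons unfolding consistent_def by blast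
  ultimately have "y \<noteq> rt G'" using reconciliation_image_ne_root[OF assms(1,2)] assms(5) by metis
  then have len: "length (chl G' y) = 2" using binary_tree_inner_length[OF bG' yc] by blast
  have "\<not> condS G' S \<rho> y"
    using consistent_condS_descendant_image_ne[OF bG' bS cons _ len yc cx] assms(5) by blast
  moreover have "condD G' \<rho> y \<or> condS G' S \<rho> y" using cons assms(3) len unfolding consistent_def by blast
  ultimately show ?thesis using assms(3) len unfolding dups_def by blast
qed

end
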